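(* (i) $F_{L_2}\Subset F^{*}_{\mathcal T_1}$ but $F_{L_1}\not\Subset F^{*}_{\mathcal T_1}$. (ii) $F_{L_4}\Subset F^{**}_{\mathcal T_1}$ but $F_{L_3}\not\Subset F^{**}_{\mathcal T_1}$. (iii) $F_{L_3}\Subset F^{*}_{\mathcal T_2}$ but $F_{L_4}\not\Subset F^{*}_{\mathcal T_2}$. (iv) $F_Q\Subset F^{*}_{\mathcal T_1}$, $F_Q\Subset F^{**}_{\mathcal T_1}$ and $F_Q\Subset F^{*}_{\mathcal T_2}$.
   Context: $H_k\subseteq\mathbb R[x,y,z]$: real ternary forms of degree $k$; $P_{3,4}=\{f\in H_4: f\ge0\text{ on }\mathbb P^2(\mathbb R)\}$. For $f\in P_{3,4}$, $F_f=\{g\in P_{3,4}: f-\epsilon g\in P_{3,4}$ for some $\epsilon>0\}$ (the smallest face of $P_{3,4}$ containing $f$). $GL_3(\mathbb R)$ acts on forms by $(\sigma f)(a)=f(\sigma^{-1}a)$. For faces $F,G$ of $P_{3,4}$, $F\Subset G$ means there is $\sigma\in GL_3(\mathbb R)$ with $F\subseteq\sigma(G)$. For a real line $l'$ (identified with a defining linear form) and a projective linear subspace $U\subseteq\mathbb P^2(\mathbb R)$, $F_{(l',U)}=\{l'^2g: g\in H_2,\ g\ge0\text{ on }\mathbb P^2(\mathbb R),\ g|_U=0\}$. Fix distinct real lines $l,k$, $p\in l$, $q\notin l$: $F_{L_1}=F_{(l,\{q\})}$, $F_{L_2}=F_{(l,\{p\})}$, $F_{L_3}=F_{(l,k)}$,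 $F_{L_4}=F_{(l,l)}$. Further $F_Q=F_{g^2}$ with $g=x^2-y^2+z^2$; $F^{*}_{\mathcal T_1}=F_f$ with $f=(xy+z^2)^2+y^2z^2+y^4$; $F^{**}_{\mathcal T_1}=F_f$ with $f=(xy+z^2)^2+y^4$; $F^{*}_{\mathcal T_2}=F_f$ with $f=(xy+z^2)^2+y^2z^2$. *)

theory Defs
  imports "HOL-Analysis.Analysis"
begin

text \<open>Real ternary forms are represented as functions on real^3 (polynomial functions
  determine the polynomial uniquely). Coordinates: x = v$1, y = v$2, z = v$3.\<close>

definition is_form :: "nat \<Rightarrow> (real^3 \<Rightarrow> real) \<Rightarrow> bool" where
  "is_form d f \<longleftrightarrow> (\<exists>c :: nat \<Rightarrow> nat \<Rightarrow> real. \<forall>v.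
     f v = (\<Sum>i\<le>d. \<Sum>j\<le>d - i. c i j * (v$1)^i * (v$2)^j * (v$3)^(d - i - j)))"

text \<open>Nonnegativity on the real projective plane (equivalently on all of real^3,
  since forms are homogeneous; here all degrees are even).\<close>
definition psd :: "(real^3 \<Rightarrow> real) \<Rightarrow> bool" where
  "psd f \<longleftrightarrow> (\<forall>v. v \<noteq> 0 \<longrightarrow> f v \<ge> 0)"

definition P34 :: "(real^3 \<Rightarrow> real) set" where
  "P34 = {f. is_form 4 f \<and> psd f}"

definition face_of_form :: "(real^3 \<Rightarrow> real) \<Rightarrow> (real^3 \<Rightarrow> real) set" where
  "face_of_form f = {g \<in> P34. \<exists>\<epsilon>>0. (\<lambda>v. f v - \<epsilon> * g v) \<in> P34}"

definition act :: "real^3^3 \<Rightarrow> (real^3 \<Rightarrow> real) \<Rightarrow> (real^3 \<Rightarrow> real)" where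
  "act \<sigma> f = (\<lambda>a. f (matrix_inv \<sigma> *v a))"

definition subface :: "(real^3 \<Rightarrow> real) set \<Rightarrow> (real^3 \<Rightarrow> real) set \<Rightarrow> bool" where
  "subface F G \<longleftrightarrow> (\<exists>\<sigma>. invertible \<sigma> \<and> F \<subseteq> act \<sigma> ` G)"

text \<open>F_(l',U): l' a linear form (given by its coefficient vector), U a projective linear
  subspace given as the corresponding linear subspace of real^3.\<close>
definition F_lU :: "real^3 \<Rightarrow> (real^3) set \<Rightarrow> (real^3 \<Rightarrow> real) set" where
  "F_lU l U = {(\<lambda>v. (l \<bullet> v)^2 * g v) | g. is_form 2 g \<and> psd g \<and> (\<forall>u\<in>U. g u = 0)}"

definition proj_point :: "real^3 \<Rightarrow> (real^3) set" where "proj_point p = span {p}"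
definition proj_line :: "real^3 \<Rightarrow> (real^3) set" where "proj_line k = {v. k \<bullet> v = 0}"

definition FQ :: "(real^3 \<Rightarrow> real) set" where
  "FQ = face_of_form (\<lambda>v. ((v$1)^2 - (v$2)^2 + (v$3)^2)^2)"

definition FT1s :: "(real^3 \<Rightarrow> real) set" where
  "FT1s = face_of_form (\<lambda>v. (v$1 * v$2 + (v$3)^2)^2 + (v$2)^2 * (v$3)^2 + (v$2)^4)"

definition FT1ss :: "(real^3 \<Rightarrow> real) set" where
  "FT1ss = face_of_form (\<lambda>v. (v$1 * v$2 + (v$3)^2)^2 + (v$2)^4)"

definition FT2s :: "(real^3 \<Rightarrow> real) set" where
  "FT2s = face_of_form (\<lambda>v. (v$1 * v$2 + (v$3)^2)^2 + (v$2)^2 * (v$3)^2)"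

end

theory Submission
  imports Defs "HOL-Computational_Algebra.Polynomial"
begin

text \<open>
  Proof plan.  Every claim is reduced to an explicit inequality between quartics.

  Inclusions F \<Subset> F_f are proved with one linear substitution \<open>\<sigma>\<close> under which each member
  g of F satisfies g \<circ> \<sigma> \<le> C f (criterion subface_face_of_formI).  For the faces F_(l,U) the
  substitution makes l the coordinate y (and k the coordinate z, or sends p to e1); the
  nonnegative quadric factor h of a member l^2 h is then controlled by the structure of
  nonnegative quadrics vanishing at a point or on a line.  For F_Q the substitution turns
  x^2 - y^2 + z^2 into xy + z^2, whose square is the common leading term of the quartics.

  Non-inclusions use the converse direction (subface_face_of_formD): an inclusion gives
  \<open>\<epsilon>\<close> (l^2 u^2) \<circ> \<sigma> \<le> f for suitable linear forms u.  All three quartics vanish to high order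
  (6, 8 and 6) at e1 along the conic xy + z^2 = 0, parametrised by (1, -s^2, s), whereas the
  restrictions of l \<circ> \<sigma> and u \<circ> \<sigma> to this conic are quadratic polynomials in s.  Comparing
  orders of vanishing at s = 0 forces l and u to vanish at \<open>\<sigma>\<close> e1 (and \<open>\<sigma>\<close> e3), which
  contradicts the position of q, k relative to l.
\<close>

section \<open>Closure properties of ternary forms\<close>

definition exps :: "nat \<Rightarrow> (nat \<times> nat) set" where
  "exps d = {(i,j). i \<le> d \<and> j \<le> d - i}"

definition mon :: "nat \<Rightarrow> nat \<times> nat \<Rightarrow> real^3 \<Rightarrow> real" where
  "mon d ij v = (v$1)^(fst ij) * (v$2)^(snd ij) * (v$3)^(d - fst ij - snd ij)"

lemma exps_eq: "exps d = Sigma {..d} (\<lambda>i. {..d-i})"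
  by (auto simp: exps_def)

lemma finite_exps: "finite (exps d)"
  by (simp add: exps_eq)

lemma is_form_alt: "is_form d f \<longleftrightarrow> (\<exists>c. \<forall>v. f v = (\<Sum>ij\<in>exps d. c ij * mon d ij v))"
proof -
  have sums: "(\<Sum>i\<le>d. \<Sum>j\<le>d - i. c i j * (v$1)^i * (v$2)^j * (v$3)^(d - i - j))
     = (\<Sum>ij\<in>exps d. c (fst ij) (snd ij) * mon d ij v)" for c v
    unfolding exps_eq by (subst sum.Sigma) (auto simp: mon_def mult.assoc intro!: sum.cong)
  show ?thesis
    unfolding is_form_def sums
  proof
    assume "\<exists>c. \<forall>v. f v = (\<Sum>ij\<in>exps d. c (fst ij) (snd ij) * mon d ij v)"
    then obtain c where "\<forall>v. f v = (\<Sum>ij\<in>exps d. c (fst ij) (snd ij) * mon d ij v)" by blast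
    then show "\<exists>c. \<forall>v. f v = (\<Sum>ij\<in>exps d. c ij * mon d ij v)"
      by (intro exI[of _ "\<lambda>ij. c (fst ij) (snd ij)"])
  next
    assume "\<exists>c. \<forall>v. f v = (\<Sum>ij\<in>exps d. c ij * mon d ij v)"
    then obtain c where "\<forall>v. f v = (\<Sum>ij\<in>exps d. c ij * mon d ij v)" by blast
    then show "\<exists>c. \<forall>v. f v = (\<Sum>ij\<in>exps d. c (fst ij) (snd ij) * mon d ij v)"
      by (intro exI[of _ "\<lambda>i j. c (i,j)"]) simp
  qed
qed

lemma is_formI_monomials:
  assumes "finite A" "\<phi> ` A \<subseteq> exps d" "\<And>v. f v = (\<Sum>x\<in>A. e x * mon d (\<phi> x) v)"
  shows "is_form d f"
  unfolding is_form_alt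
proof (intro exI allI)
  fix v
  have "(\<Sum>ij\<in>exps d. (\<Sum>x\<in>{x\<in>A. \<phi> x = ij}. e x) * mon d ij v)
      = (\<Sum>ij\<in>exps d. (\<Sum>x\<in>{x\<in>A. \<phi> x = ij}. e x * mon d (\<phi> x) v))"
    by (auto simp: sum_distrib_right intro!: sum.cong)
  also have "\<dots> = (\<Sum>x\<in>A. e x * mon d (\<phi> x) v)"
    using sum.group[OF assms(1) finite_exps assms(2)] .
  finally show "f v = (\<Sum>ij\<in>exps d. (\<Sum>x\<in>{x\<in>A. \<phi> x = ij}. e x) * mon d ij v)"
    using assms(3) by simp
qed

lemma is_form_0: "is_form d (\<lambda>v. 0)"
  unfolding is_form_alt by (intro exI[of _ "\<lambda>_. 0"]) simp

lemma is_form_add: "is_form d f \<Longrightarrow> is_form d g \<Longrightarrow> is_form d (\<lambda>v. f v + g v)"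
proof -
  assume "is_form d f" "is_form d g"
  then obtain c c' where "\<forall>v. f v = (\<Sum>ij\<in>exps d. c ij * mon d ij v)"
    "\<forall>v. g v = (\<Sum>ij\<in>exps d. c' ij * mon d ij v)"
    unfolding is_form_alt by blast
  then show ?thesis unfolding is_form_alt
    by (intro exI[of _ "\<lambda>ij. c ij + c' ij"]) (simp add: sum.distrib distrib_right)
qed

lemma is_form_neg: "is_form d f \<Longrightarrow> is_form d (\<lambda>v. - f v)"
proof -
  assume "is_form d f"
  then obtain c where "\<forall>v. f v = (\<Sum>ij\<in>exps d. c ij * mon d ij v)"
    unfolding is_form_alt by blast
  then show ?thesis unfolding is_form_alt
    by (intro exI[of _ "\<lambda>ij. - c ij"]) (simp add: sum_negf)
qed

lemma is_form_diff: "is_form d f \<Longrightarrow> is_form d g \<Longrightarrow> is_form d (\<lambda>v. f v - g v)"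
  using is_form_add[of d f "\<lambda>v. - g v"] is_form_neg[of d g] by simp

lemma mon_mult:
  assumes "x \<in> exps a" "y \<in> exps b"
  shows "mon a x v * mon b y v = mon (a+b) (fst x + fst y, snd x + snd y) v"
proof -
  have e: "a + b - (fst x + fst y) - (snd x + snd y) = (a - fst x - snd x) + (b - fst y - snd y)"
    using assms by (auto simp: exps_def)
  show ?thesis unfolding mon_def fst_conv snd_conv e power_add by (simp add: algebra_simps)
qed

lemma is_form_mult:
  assumes "is_form a f" "is_form b g" "a + b = d"
  shows "is_form d (\<lambda>v. f v * g v)"
proof -
  obtain c c' where c: "\<And>v. f v = (\<Sum>x\<in>exps a. c x * mon a x v)"
    and c': "\<And>v. g v = (\<Sum>y\<in>exps b. c' y * mon b y v)"
    using assms(1,2) unfolding is_form_alt by blast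
  define \<phi> where "\<phi> = (\<lambda>(x::nat\<times>nat, y::nat\<times>nat). (fst x + fst y, snd x + snd y))"
  show ?thesis
  proof (rule is_formI_monomials[where A="exps a \<times> exps b" and e="\<lambda>(x,y). c x * c' y" and \<phi>=\<phi>])
    show "finite (exps a \<times> exps b)" by (simp add: finite_exps)
    show "\<phi> ` (exps a \<times> exps b) \<subseteq> exps d"
      using assms(3) by (auto simp: exps_def \<phi>_def)
    fix v
    have "f v * g v = (\<Sum>(x,y)\<in>exps a \<times> exps b. (c x * mon a x v) * (c' y * mon b y v))"
      unfolding c c' sum_product sum.cartesian_product ..
    also have "\<dots> = (\<Sum>xy\<in>exps a \<times> exps b. (case xy of (x,y) \<Rightarrow> c x * c' y) * mon d (\<phi> xy) v)"
      using mon_mult assms(3) by (intro sum.cong) (auto simp: \<phi>_def algebra_simps)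
    finally show "f v * g v = (\<Sum>xy\<in>exps a \<times> exps b. (case xy of (x,y) \<Rightarrow> c x * c' y) * mon d (\<phi> xy) v)" .
  qed
qed

lemma is_form_const: "is_form 0 (\<lambda>v. c)"
  unfolding is_form_def by (intro exI[of _ "\<lambda>_ _. c"]) simp

lemma is_form_coords:
  "is_form 1 (\<lambda>v. v$1)" "is_form 1 (\<lambda>v. v$2)" "is_form 1 (\<lambda>v. v$3)"
  unfolding is_form_def
  by (intro exI[of _ "\<lambda>i j. if i = 1 then 1 else 0"]
        exI[of _ "\<lambda>i j. if i = 0 \<and> j = 1 then 1 else 0"]
        exI[of _ "\<lambda>i j. if i = 0 \<and> j = 0 then 1 else 0"]; simp add: atMost_Suc)+

lemma is_form_pow: "is_form a f \<Longrightarrow> n * a = d \<Longrightarrow> is_form d (\<lambda>v. f v ^ n)"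
proof (induction n arbitrary: d)
  case 0 then show ?case using is_form_const[of 1] by simp
next
  case (Suc n)
  have "is_form (a + n*a) (\<lambda>v. f v * f v ^ n)"
    by (rule is_form_mult[OF Suc.prems(1) Suc.IH[OF Suc.prems(1) refl]]) simp
  then show ?case using Suc.prems by simp
qed

lemma is_form_sum: "finite S \<Longrightarrow> (\<And>i. i \<in> S \<Longrightarrow> is_form d (f i)) \<Longrightarrow> is_form d (\<lambda>v. \<Sum>i\<in>S. f i v)"
  by (induction S rule: finite_induct) (auto intro: is_form_0 is_form_add)

lemma is_form_inner: "is_form 1 (\<lambda>v. a \<bullet> v)"
proof -
  have "is_form (0 + 1) (\<lambda>v. a$i * v$i)" if "i \<in> {1,2,3}" for i
    using that is_form_coords by (auto intro: is_form_mult[OF is_form_const])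
  then have "is_form 1 (\<lambda>v. a$1 * v$1 + a$2 * v$2 + a$3 * v$3)"
    by (intro is_form_add) auto
  then show ?thesis by (simp add: inner_vec_def sum_3)
qed

lemma is_form_comp: "is_form d h \<Longrightarrow> is_form d (\<lambda>v. h (M *v v))"
proof -
  assume "is_form d h"
  then obtain c where c: "\<And>v. h v = (\<Sum>ij\<in>exps d. c ij * mon d ij v)"
    unfolding is_form_alt by blast
  have row: "(M *v v)$k = row k M \<bullet> v" for k v
    by (simp add: matrix_vector_mult_def inner_vec_def row_def mult.commute)
  have "is_form d (\<lambda>v. c ij * mon d ij (M *v v))" if ij: "ij \<in> exps d" for ij
  proof -
    obtain i j where ij': "ij = (i,j)" "i + j \<le> d" using ij by (cases ij) (auto simp: exps_def)
    have "is_form (i + j + (d - i - j))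
        (\<lambda>v. (row 1 M \<bullet> v)^i * (row 2 M \<bullet> v)^j * (row 3 M \<bullet> v)^(d-i-j))"
      by (rule is_form_mult[OF is_form_mult]; (rule is_form_pow[OF is_form_inner])?) auto
    then have "is_form (0 + d)
        (\<lambda>v. c ij * ((row 1 M \<bullet> v)^i * (row 2 M \<bullet> v)^j * (row 3 M \<bullet> v)^(d-i-j)))"
      using ij' by (intro is_form_mult[OF is_form_const]) auto
    then show ?thesis unfolding mon_def row ij' by (simp add: mult.assoc)
  qed
  then have "is_form d (\<lambda>v. \<Sum>ij\<in>exps d. c ij * mon d ij (M *v v))"
    by (rule is_form_sum[OF finite_exps])
  then show ?thesis by (simp add: c)
qed

section \<open>Linear changes of coordinates\<close>

lemma matrix_inv_props:
  fixes \<sigma> :: "'a::field^'n^'n"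
  assumes "invertible \<sigma>"
  shows "\<sigma> ** matrix_inv \<sigma> = mat 1" "matrix_inv \<sigma> ** \<sigma> = mat 1"
proof -
  have "\<exists>A'. \<sigma> ** A' = mat 1 \<and> A' ** \<sigma> = mat 1" using assms unfolding invertible_def .
  from someI_ex[OF this] show "\<sigma> ** matrix_inv \<sigma> = mat 1" "matrix_inv \<sigma> ** \<sigma> = mat 1"
    unfolding matrix_inv_def by auto
qed

lemma matrix_inv_cancel:
  fixes \<sigma> :: "'a::field^'n^'n"
  assumes "invertible \<sigma>"
  shows "\<sigma> *v (matrix_inv \<sigma> *v a) = a" "matrix_inv \<sigma> *v (\<sigma> *v a) = a"
  by (simp_all add: matrix_vector_mul_assoc matrix_inv_props[OF assms])

lemma invertible_nonzero:
  fixes \<sigma> :: "'a::field^'n^'n"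
  shows "invertible \<sigma> \<Longrightarrow> w \<noteq> 0 \<Longrightarrow> \<sigma> *v w \<noteq> 0"
  by (metis matrix_inv_cancel(2) matrix_vector_mult_0_right)

lemma invertibleI_ker:
  fixes \<sigma> :: "'a::field^'n^'n"
  shows "(\<And>x. \<sigma> *v x = 0 \<Longrightarrow> x = 0) \<Longrightarrow> invertible \<sigma>"
  unfolding invertible_left_inverse matrix_left_invertible_ker by blast

lemma act_comp: "invertible \<sigma> \<Longrightarrow> act \<sigma> (\<lambda>v. g (\<sigma> *v v)) = g"
  by (simp add: act_def matrix_inv_cancel(1))

lemma act_eqD: "invertible \<sigma> \<Longrightarrow> act \<sigma> g0 = g \<Longrightarrow> g0 w = g (\<sigma> *v w)"
  by (auto simp: act_def matrix_inv_cancel(2))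

lemma psd_comp: "psd h \<Longrightarrow> invertible \<sigma> \<Longrightarrow> psd (\<lambda>v. h (\<sigma> *v v))"
  unfolding psd_def using invertible_nonzero by blast

lemma inner_mat:
  "u \<bullet> ((\<sigma>::real^3^3) *v v) = v$1 * (u \<bullet> (\<sigma> *v axis 1 1)) + v$2 * (u \<bullet> (\<sigma> *v axis 2 1))
     + v$3 * (u \<bullet> (\<sigma> *v axis 3 1))"
proof -
  have "\<sigma> *v v = v$1 *\<^sub>R (\<sigma> *v axis 1 1) + v$2 *\<^sub>R (\<sigma> *v axis 2 1) + v$3 *\<^sub>R (\<sigma> *v axis 3 1)"
    by (simp add: matrix_vector_mult_def vec_eq_iff sum_3 axis_def algebra_simps)
  then show ?thesis by (simp add: inner_add_right)
qed

lemma inner_mat_zero: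
  assumes "invertible (\<sigma>::real^3^3)" "\<And>w. u \<bullet> (\<sigma> *v w) = 0"
  shows "u = 0"
  using assms(2)[of "matrix_inv \<sigma> *v u"] by (simp add: matrix_inv_cancel(1)[OF assms(1)])

definition cols :: "real^3 \<Rightarrow> real^3 \<Rightarrow> real^3 \<Rightarrow> real^3^3" where
  "cols a b c = (\<chi> i j. (if j = 1 then a else if j = 2 then b else c) $ i)"

lemma cols_mult: "cols a b c *v v = v$1 *\<^sub>R a + v$2 *\<^sub>R b + v$3 *\<^sub>R c"
  by (simp add: cols_def matrix_vector_mult_def vec_eq_iff sum_3 mult.commute)

lemma adapted_coordinates:
  fixes l m :: "real^3"
  assumes n: "cross3 l m \<noteq> 0"
  obtains \<sigma> :: "real^3^3" where "invertible \<sigma>" "\<And>v. l \<bullet> (\<sigma> *v v) = v$2"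
    "\<And>v. m \<bullet> (\<sigma> *v v) = v$3" "\<sigma> *v axis 1 1 = cross3 l m"
proof -
  define D where "D = (l \<bullet> l) * (m \<bullet> m) - (l \<bullet> m)^2"
  have cc: "cross3 l m \<bullet> cross3 l m = D"
    by (simp add: D_def dot_cross power2_eq_square inner_commute)
  then have D0: "D \<noteq> 0" using n by (metis inner_eq_zero_iff)
  define a2 where "a2 = ((m \<bullet> m)/D) *\<^sub>R l - ((l \<bullet> m)/D) *\<^sub>R m"
  define a3 where "a3 = ((l \<bullet> l)/D) *\<^sub>R m - ((l \<bullet> m)/D) *\<^sub>R l"
  define \<sigma> where "\<sigma> = cols (cross3 l m) a2 a3"
  have "l \<bullet> a2 = ((m \<bullet> m) * (l \<bullet> l) - (l \<bullet> m) * (l \<bullet> m)) / D"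
    "m \<bullet> a2 = ((m \<bullet> m) * (l \<bullet> m) - (l \<bullet> m) * (m \<bullet> m)) / D"
    "l \<bullet> a3 = ((l \<bullet> l) * (l \<bullet> m) - (l \<bullet> m) * (l \<bullet> l)) / D"
    "m \<bullet> a3 = ((l \<bullet> l) * (m \<bullet> m) - (l \<bullet> m) * (l \<bullet> m)) / D"
    by (simp_all add: a2_def a3_def inner_diff_right diff_divide_distrib inner_commute)
  then have "l \<bullet> a2 = 1" "m \<bullet> a2 = 0" "l \<bullet> a3 = 0" "m \<bullet> a3 = 1"
    using D0 by (simp_all add: D_def power2_eq_square mult.commute)
  then have L: "l \<bullet> (\<sigma> *v v) = v$2" "m \<bullet> (\<sigma> *v v) = v$3" for v
    by (simp_all add: \<sigma>_def cols_mult inner_add_right dot_cross_self)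
  have "invertible \<sigma>"
  proof (rule invertibleI_ker)
    fix x assume x: "\<sigma> *v x = 0"
    have "x$2 = 0" "x$3 = 0" using L[of x] x by auto
    then have "x$1 *\<^sub>R cross3 l m = 0" using x by (simp add: \<sigma>_def cols_mult)
    then have "x$1 = 0" using n by auto
    then show "x = 0" using \<open>x$2 = 0\<close> \<open>x$3 = 0\<close> by (simp add: vec_eq_iff forall_3)
  qed
  moreover have "\<sigma> *v axis 1 1 = cross3 l m" by (simp add: \<sigma>_def cols_mult axis_def)
  ultimately show ?thesis using that L by blast
qed

lemma cross3_nonzero:
  fixes l k :: "real^3"
  assumes "l \<noteq> 0" "\<not> (\<exists>c. k = c *\<^sub>R l)"
  shows "cross3 l k \<noteq> 0"
proof
  assume "cross3 l k = 0"
  then have lk: "(l \<bullet> l) *\<^sub>R k = (l \<bullet> k) *\<^sub>R l"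
    using Lagrange[of l l k] by simp
  have "k = (1 / (l \<bullet> l)) *\<^sub>R ((l \<bullet> l) *\<^sub>R k)"
    using assms(1) by simp
  also have "\<dots> = ((l \<bullet> k) / (l \<bullet> l)) *\<^sub>R l"
    unfolding lk by simp
  finally show False using assms(2) by blast
qed

lemma adapted_coordinates_point:
  fixes l p :: "real^3"
  assumes "l \<noteq> 0" "p \<noteq> 0" "l \<bullet> p = 0"
  obtains \<sigma> :: "real^3^3" where "invertible \<sigma>" "\<And>v. l \<bullet> (\<sigma> *v v) = v$2"
    "\<sigma> *v axis 1 1 = (- (l \<bullet> l)) *\<^sub>R p"
proof -
  have "cross3 l (cross3 l p) = (- (l \<bullet> l)) *\<^sub>R p"
    using assms(3) by (simp add: Lagrange)
  moreover then have "cross3 l (cross3 l p) \<noteq> 0" using assms(1,2) by simp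
  ultimately show ?thesis using adapted_coordinates that by metis
qed

lemma adapted_coordinates_line:
  fixes a :: "real^3"
  assumes "a \<noteq> 0"
  obtains \<sigma> :: "real^3^3" where "invertible \<sigma>" "\<And>v. a \<bullet> (\<sigma> *v v) = v$2"
proof -
  obtain i where "cross3 a (axis i 1) \<noteq> 0"
    using cross_basis_nonzero[OF assms] by blast
  then show ?thesis using adapted_coordinates that by metis
qed

section \<open>Nonnegative quadrics with prescribed zeros\<close>

lemma quadric_coeffs:
  assumes "is_form 2 H"
  obtains a b c d e f where "\<And>v. H v = a*(v$1)^2 + b* v$1* v$2 + c* v$1* v$3 + d*(v$2)^2
    + e* v$2* v$3 + f*(v$3)^2"
proof -
  obtain cc where cc: "\<And>v. H v = (\<Sum>i\<le>2. \<Sum>j\<le>2 - i. cc i j * (v$1)^i * (v$2)^j * (v$3)^(2 - i - j))"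
    using assms unfolding is_form_def by blast
  have "H v = cc 2 0*(v$1)^2 + cc 1 1* v$1* v$2 + cc 1 0* v$1* v$3 + cc 0 2*(v$2)^2
      + cc 0 1* v$2* v$3 + cc 0 0*(v$3)^2" for v
    unfolding cc by (simp add: numeral_2_eq_2 atMost_Suc algebra_simps)
  then show ?thesis using that by blast
qed

text \<open>An affine function of one real variable that is nonnegative everywhere is constant;
  this is how nonnegativity kills the mixed terms of a quadric at one of its zeros.\<close>
lemma affine_nonneg_slope: assumes "\<And>t::real. 0 \<le> b*t + d" shows "b = 0"
proof (rule ccontr)
  assume b: "b \<noteq> 0"
  have "0 \<le> b * (-(\<bar>d\<bar>+1)/b) + d" by (rule assms)
  also have "\<dots> = -(\<bar>d\<bar>+1) + d" using b by simp
  finally show False by simp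
qed

lemma psd_at_vector:
  "psd H \<Longrightarrow> (vector [a, b, c] :: real^3) $ i \<noteq> 0 \<Longrightarrow> 0 \<le> H (vector [a, b, c])"
  unfolding psd_def by (metis zero_index)

lemma quadric_zero_at_e1:
  assumes "is_form 2 H" "psd H" "H (axis 1 1) = 0"
  shows "\<exists>C. \<forall>w. H w \<le> C * ((w$2)^2 + (w$3)^2)"
proof -
  obtain a b c d e f where H: "\<And>v. H v = a*(v$1)^2 + b* v$1* v$2 + c* v$1* v$3 + d*(v$2)^2
      + e* v$2* v$3 + f*(v$3)^2"
    using quadric_coeffs[OF assms(1)] by blast
  have a: "a = 0" using assms(3) H[of "axis 1 1"] by (simp add: axis_def)
  have "b = 0"
  proof (rule affine_nonneg_slope)
    fix t
    show "0 \<le> b*t + d" using psd_at_vector[OF assms(2), of t 1 0 2] H a by simp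
  qed
  moreover have "c = 0"
  proof (rule affine_nonneg_slope)
    fix t
    show "0 \<le> c*t + f" using psd_at_vector[OF assms(2), of t 0 1 3] H a by simp
  qed
  ultimately have Hw: "H w = d*(w$2)^2 + e*(w$2*w$3) + f*(w$3)^2" for w
    using H a by (simp add: mult.assoc)
  show ?thesis
  proof (intro exI[of _ "\<bar>d\<bar>+\<bar>e\<bar>+\<bar>f\<bar>"] allI)
    fix w :: "real^3"
    have "d*(w$2)^2 \<le> \<bar>d\<bar>*((w$2)^2 + (w$3)^2)"
      by (rule order.trans[OF _ mult_left_mono[of "(w$2)^2"]]) (auto simp: abs_ge_self mult_right_mono)
    moreover have "f*(w$3)^2 \<le> \<bar>f\<bar>*((w$2)^2 + (w$3)^2)"
      by (rule order.trans[OF _ mult_left_mono[of "(w$3)^2"]]) (auto simp: abs_ge_self mult_right_mono)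
    moreover have "e*(w$2*w$3) \<le> \<bar>e\<bar>*((w$2)^2 + (w$3)^2)"
    proof -
      have "e * (w$2*w$3) \<le> \<bar>e\<bar> * \<bar>w$2*w$3\<bar>" by (metis abs_ge_self abs_mult)
      also have "\<bar>w$2*w$3\<bar> \<le> (w$2)^2 + (w$3)^2"
      proof -
        have "2 * (\<bar>w$2\<bar> * \<bar>w$3\<bar>) \<le> (w$2)^2 + (w$3)^2"
          using sum_squares_bound[of "\<bar>w$2\<bar>" "\<bar>w$3\<bar>"] by (simp add: mult.assoc)
        moreover have "0 \<le> \<bar>w$2\<bar> * \<bar>w$3\<bar>" by simp
        ultimately show ?thesis unfolding abs_mult by linarith
      qed
      then have "\<bar>e\<bar> * \<bar>w$2*w$3\<bar> \<le> \<bar>e\<bar> * ((w$2)^2 + (w$3)^2)" by (simp add: mult_left_mono)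
      finally show ?thesis .
    qed
    ultimately show "H w \<le> (\<bar>d\<bar>+\<bar>e\<bar>+\<bar>f\<bar>) * ((w$2)^2 + (w$3)^2)"
      unfolding Hw by (simp add: distrib_right)
  qed
qed

lemma quadric_zero_on_y0:
  assumes "is_form 2 H" "psd H" "\<And>w. w$2 = 0 \<Longrightarrow> H w = 0"
  shows "\<exists>d. \<forall>w. H w = d * (w$2)^2"
proof -
  obtain a b c d e f where H: "\<And>v. H v = a*(v$1)^2 + b* v$1* v$2 + c* v$1* v$3 + d*(v$2)^2
      + e* v$2* v$3 + f*(v$3)^2"
    using quadric_coeffs[OF assms(1)] by blast
  have a: "a = 0" using assms(3)[of "vector [1,0,0]"] H[of "vector [1,0,0]"] by simp
  have f: "f = 0" using assms(3)[of "vector [0,0,1]"] H[of "vector [0,0,1]"] by simp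
  have c: "c = 0" using assms(3)[of "vector [1,0,1]"] H[of "vector [1,0,1]"] a f by simp
  have "b = 0"
  proof (rule affine_nonneg_slope)
    fix t
    show "0 \<le> b*t + d" using psd_at_vector[OF assms(2), of t 1 0 2] H a f c by simp
  qed
  moreover have "e = 0"
  proof (rule affine_nonneg_slope)
    fix t
    show "0 \<le> e*t + d"
      using psd_at_vector[OF assms(2), of 0 1 t 2] H a f c by (simp add: algebra_simps)
  qed
  ultimately show ?thesis using H a c f by auto
qed

lemma quadric_zero_on_line:
  assumes "a \<noteq> 0" "is_form 2 h" "psd h" "\<And>v. a \<bullet> v = 0 \<Longrightarrow> h v = 0"
  shows "\<exists>d. \<forall>v. h v = d * (a \<bullet> v)^2"
proof -
  obtain \<sigma> :: "real^3^3" where inv: "invertible \<sigma>" and A: "\<And>v. a \<bullet> (\<sigma> *v v) = v$2"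
    using adapted_coordinates_line[OF assms(1)] by blast
  obtain d where d: "\<And>w. h (\<sigma> *v w) = d * (w$2)^2"
    using quadric_zero_on_y0[OF is_form_comp[OF assms(2)] psd_comp[OF assms(3) inv]]
      assms(4) A by metis
  have "h v = d * (a \<bullet> v)^2" for v
    using d[of "matrix_inv \<sigma> *v v"] A[of "matrix_inv \<sigma> *v v"]
    by (simp add: matrix_inv_cancel(1)[OF inv])
  then show ?thesis by blast
qed

section \<open>Criteria for inclusions of faces up to coordinate change\<close>

lemma subface_face_of_formI:
  fixes \<sigma> :: "real^3^3"
  assumes inv: "invertible \<sigma>" and f: "f \<in> P34" and F: "F \<subseteq> P34"
    and dom: "\<And>g. g \<in> F \<Longrightarrow> \<exists>C. \<forall>w. w \<noteq> 0 \<longrightarrow> g (\<sigma> *v w) \<le> C * f w"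
  shows "subface F (face_of_form f)"
  unfolding subface_def
proof (intro exI[of _ \<sigma>] conjI subsetI inv)
  fix g assume g: "g \<in> F"
  define g0 where "g0 = (\<lambda>v. g (\<sigma> *v v))"
  obtain C where C: "\<And>w. w \<noteq> 0 \<Longrightarrow> g0 w \<le> C * f w" using dom[OF g] unfolding g0_def by blast
  have g0_P34: "g0 \<in> P34"
    using g F inv unfolding g0_def P34_def by (auto intro: is_form_comp psd_comp)
  define \<epsilon> where "\<epsilon> = 1 / (\<bar>C\<bar> + 1)"
  have \<epsilon>: "\<epsilon> > 0" by (simp add: \<epsilon>_def add_pos_nonneg)
  have "\<epsilon> * g0 w \<le> f w" if "w \<noteq> 0" for w
  proof -
    have f0: "0 \<le> f w" using f that by (simp add: P34_def psd_def)
    have "g0 w \<le> (\<bar>C\<bar> + 1) * f w"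
      using C[OF that] f0 by (smt (verit) abs_ge_self mult_right_mono)
    then show ?thesis by (simp add: \<epsilon>_def field_simps add_pos_nonneg)
  qed
  then have "(\<lambda>v. f v - \<epsilon> * g0 v) \<in> P34"
    using f g0_P34 unfolding P34_def psd_def
    by (auto intro!: is_form_diff is_form_mult[OF is_form_const, where d=4, simplified])
  then have "g0 \<in> face_of_form f" using g0_P34 \<epsilon> unfolding face_of_form_def by blast
  moreover have "g = act \<sigma> g0" unfolding g0_def using act_comp[OF inv] by simp
  ultimately show "g \<in> act \<sigma> ` face_of_form f" by blast
qed

lemma subface_face_of_formD:
  assumes "subface F (face_of_form f)"
  shows "\<exists>\<sigma>::real^3^3. invertible \<sigma> \<and> (\<forall>g\<in>F. \<exists>\<epsilon>>0. \<forall>w. w \<noteq> 0 \<longrightarrow> \<epsilon> * g (\<sigma> *v w) \<le> f w)"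
proof -
  obtain \<sigma> :: "real^3^3" where inv: "invertible \<sigma>" and sub: "F \<subseteq> act \<sigma> ` face_of_form f"
    using assms unfolding subface_def by blast
  have "\<exists>\<epsilon>>0. \<forall>w. w \<noteq> 0 \<longrightarrow> \<epsilon> * g (\<sigma> *v w) \<le> f w" if g: "g \<in> F" for g
  proof -
    obtain g0 where g0: "g0 \<in> face_of_form f" "act \<sigma> g0 = g" using sub g by blast
    then obtain \<epsilon> where \<epsilon>: "\<epsilon> > 0" "(\<lambda>v. f v - \<epsilon> * g0 v) \<in> P34"
      unfolding face_of_form_def by blast
    have "\<epsilon> * g (\<sigma> *v w) \<le> f w" if "w \<noteq> 0" for w
      using \<epsilon>(2) that act_eqD[OF inv g0(2), of w] unfolding P34_def psd_def by auto
    then show ?thesis using \<epsilon>(1) by blast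
  qed
  then show ?thesis using inv by blast
qed

lemma F_lU_elem:
  assumes "g \<in> F_lU l U"
  obtains h where "g = (\<lambda>v. (l \<bullet> v)^2 * h v)" "is_form 2 h" "psd h" "\<forall>u\<in>U. h u = 0"
  using assms unfolding F_lU_def by blast

lemma F_lU_subset_P34: "F_lU l U \<subseteq> P34"
proof
  fix g assume "g \<in> F_lU l U"
  then obtain h where g: "g = (\<lambda>v. (l \<bullet> v)^2 * h v)" and h: "is_form 2 h" "psd h"
    by (rule F_lU_elem)
  have "is_form 4 g" unfolding g
    by (rule is_form_mult[OF is_form_pow[OF is_form_inner] h(1)]) auto
  moreover have "psd g" using h(2) unfolding g psd_def by simp
  ultimately show "g \<in> P34" by (simp add: P34_def)
qed

lemma F_lU_square: "(\<And>u. u \<in> U \<Longrightarrow> a \<bullet> u = 0) \<Longrightarrow> (\<lambda>v. (l \<bullet> v)^2 * (a \<bullet> v)^2) \<in> F_lU l U"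
  unfolding F_lU_def psd_def by (auto intro!: exI is_form_pow[OF is_form_inner])

section \<open>Orders of vanishing along the conic xy + z^2 = 0\<close>

lemma order_0_ge_of_bound:
  fixes p :: "real poly"
  assumes nz: "p \<noteq> 0" and b: "\<And>s. s \<noteq> 0 \<Longrightarrow> \<bar>s\<bar> < 1 \<Longrightarrow> \<bar>poly p s\<bar> \<le> C * \<bar>s\<bar>^N"
  shows "N \<le> order 0 p"
proof (rule ccontr)
  define m where "m = order 0 p"
  assume "\<not> N \<le> order 0 p"
  then have mN: "m < N" by (simp add: m_def)
  obtain q where q: "p = [:- 0, 1:] ^ m * q" "\<not> [:- 0, 1:] dvd q"
    using order_decomp[OF nz, of 0] m_def by blast
  have q0: "poly q 0 \<noteq> 0" using q(2) by (simp add: dvd_iff_poly_eq_0)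
  have "\<bar>poly q s\<bar> \<le> C * \<bar>s\<bar>^(N-m)" if s: "s \<noteq> 0" "\<bar>s\<bar> < 1" for s
  proof -
    have "\<bar>s\<bar>^m * \<bar>poly q s\<bar> = \<bar>poly p s\<bar>" by (simp add: q(1) abs_mult power_abs)
    also have "\<dots> \<le> C * \<bar>s\<bar>^N" using b s by auto
    also have "\<dots> = \<bar>s\<bar>^m * (C * \<bar>s\<bar>^(N-m))"
      using mN by (simp flip: power_add)
    finally show ?thesis using s by (simp add: mult_le_cancel_left_pos)
  qed
  then have ev: "eventually (\<lambda>s. \<bar>poly q s\<bar> \<le> C * \<bar>s\<bar>^(N-m)) (at (0::real))"
    unfolding eventually_at by (intro exI[of _ 1]) auto
  have "((\<lambda>s. \<bar>poly q s\<bar>) \<longlongrightarrow> \<bar>poly q 0\<bar>) (at (0::real))"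
    using poly_isCont[where p=q and x=0] unfolding isCont_def by (intro tendsto_rabs)
  moreover have "((\<lambda>s. C * \<bar>s\<bar>^(N-m)) \<longlongrightarrow> C * \<bar>0\<bar>^(N-m)) (at (0::real))"
    by (intro tendsto_intros)
  ultimately have "\<bar>poly q 0\<bar> \<le> C * \<bar>0\<bar>^(N-m)"
    using ev by (intro tendsto_le[of "at 0"]) simp_all
  then show False using q0 mN by (simp add: zero_power)
qed

lemma order_0_coeffs:
  fixes p :: "'a::idom poly"
  assumes "p \<noteq> 0"
  shows "1 \<le> order 0 p \<Longrightarrow> coeff p 0 = 0"
    and "2 \<le> order 0 p \<Longrightarrow> coeff p 0 = 0 \<and> coeff p 1 = 0"
proof -
  assume "1 \<le> order 0 p"
  then show "coeff p 0 = 0" using assms by (metis order_root poly_0_coeff_0 not_one_le_zero)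
next
  assume "2 \<le> order 0 p"
  then have "[:-0, 1:] ^ 2 dvd p" using assms order_divides by blast
  then obtain r where "p = [:0,1:]^2 * r" by auto
  then show "coeff p 0 = 0 \<and> coeff p 1 = 0" by (simp add: power2_eq_square)
qed

text \<open>The conic xy + z^2 = 0 through e1, parametrised by s, and the restriction of the
  linear form a \<circ> \<sigma> to it, a quadratic polynomial in s.\<close>
definition conic_point :: "real \<Rightarrow> real^3" where
  "conic_point s = vector [1, -(s^2), s]"

definition conic_poly :: "real^3 \<Rightarrow> real^3^3 \<Rightarrow> real poly" where
  "conic_poly a \<sigma> = [: a \<bullet> (\<sigma> *v axis 1 1), a \<bullet> (\<sigma> *v axis 3 1), - (a \<bullet> (\<sigma> *v axis 2 1)) :]"

lemma conic_point_nonzero: "conic_point s \<noteq> 0"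
  by (metis conic_point_def vector_3(1) zero_index zero_neq_one)

lemma poly_conic_poly: "poly (conic_poly a \<sigma>) s = a \<bullet> (\<sigma> *v conic_point s)"
  by (subst inner_mat) (simp add: conic_poly_def conic_point_def algebra_simps power2_eq_square)

lemma conic_poly_nonzero:
  assumes inv: "invertible \<sigma>" and a: "a \<noteq> 0"
  shows "conic_poly a \<sigma> \<noteq> 0"
proof
  assume "conic_poly a \<sigma> = 0"
  then have "a \<bullet> (\<sigma> *v axis i 1) = 0" if "i \<in> {1,2,3}" for i
    using that by (auto simp: conic_poly_def)
  then have "\<And>w. a \<bullet> (\<sigma> *v w) = 0" by (subst inner_mat) simp
  then show False using inner_mat_zero[OF inv] a by blast
qed

lemma order_conic_poly_le_2:
  assumes "invertible \<sigma>" "a \<noteq> 0"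
  shows "order 0 (conic_poly a \<sigma>) \<le> 2"
proof -
  have "degree (conic_poly a \<sigma>) \<le> 2" unfolding conic_poly_def
    by (rule order.trans[OF degree_pCons_le]) (simp add: le_SucI degree_pCons_le)
  then show ?thesis using order_degree[OF conic_poly_nonzero[OF assms], of 0] by linarith
qed

lemma conic_order_zeros:
  assumes "invertible \<sigma>" "a \<noteq> 0"
  shows "1 \<le> order 0 (conic_poly a \<sigma>) \<Longrightarrow> a \<bullet> (\<sigma> *v axis 1 1) = 0"
    and "2 \<le> order 0 (conic_poly a \<sigma>) \<Longrightarrow> a \<bullet> (\<sigma> *v axis 1 1) = 0 \<and> a \<bullet> (\<sigma> *v axis 3 1) = 0"
  using order_0_coeffs[OF conic_poly_nonzero[OF assms]] by (simp_all add: conic_poly_def)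

lemma order_bound_from_domination:
  fixes \<sigma> :: "real^3^3"
  assumes inv: "invertible \<sigma>" and a: "a \<noteq> 0" and b: "b \<noteq> 0" and \<epsilon>: "\<epsilon> > 0"
    and dom: "\<forall>w. w \<noteq> 0 \<longrightarrow> \<epsilon> * ((a \<bullet> (\<sigma> *v w))^2 * (b \<bullet> (\<sigma> *v w))^2) \<le> f w"
    and conic: "\<forall>s. \<bar>s\<bar> < 1 \<longrightarrow> f (conic_point s) \<le> C * \<bar>s\<bar>^N"
  shows "N \<le> 2 * (order 0 (conic_poly a \<sigma>) + order 0 (conic_poly b \<sigma>))"
proof -
  define p where "p = (conic_poly a \<sigma> * conic_poly b \<sigma>)^2"
  have nz: "conic_poly a \<sigma> \<noteq> 0" "conic_poly b \<sigma> \<noteq> 0"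
    using conic_poly_nonzero inv a b by auto
  then have pnz: "p \<noteq> 0" by (simp add: p_def)
  have "N \<le> order 0 p"
  proof (rule order_0_ge_of_bound[OF pnz, where C="C/\<epsilon>"])
    fix s :: real assume s: "s \<noteq> 0" "\<bar>s\<bar> < 1"
    have "\<epsilon> * poly p s \<le> f (conic_point s)"
      using dom conic_point_nonzero[of s] by (simp add: p_def poly_conic_poly power_mult_distrib)
    also have "\<dots> \<le> C * \<bar>s\<bar>^N" using conic s(2) by blast
    finally show "\<bar>poly p s\<bar> \<le> C / \<epsilon> * \<bar>s\<bar>^N"
      using \<epsilon> by (simp add: p_def field_simps)
  qed
  also have "order 0 p = 2 * (order 0 (conic_poly a \<sigma>) + order 0 (conic_poly b \<sigma>))"
    using nz by (simp add: p_def power2_eq_square order_mult)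
  finally show ?thesis .
qed

lemma proportional_if_common_zeros:
  fixes \<sigma> :: "real^3^3"
  assumes inv: "invertible \<sigma>" and b: "b \<noteq> 0"
    and a0: "a \<bullet> (\<sigma> *v axis 1 1) = 0" "a \<bullet> (\<sigma> *v axis 3 1) = 0"
    and b0: "b \<bullet> (\<sigma> *v axis 1 1) = 0" "b \<bullet> (\<sigma> *v axis 3 1) = 0"
  shows "\<exists>c. a = c *\<^sub>R b"
proof -
  have b2: "b \<bullet> (\<sigma> *v axis 2 1) \<noteq> 0"
    using inner_mat_zero[OF inv, of b] b b0 by (metis add_0 inner_mat mult_zero_right)
  define c where "c = (a \<bullet> (\<sigma> *v axis 2 1)) / (b \<bullet> (\<sigma> *v axis 2 1))"
  have "(a - c *\<^sub>R b) \<bullet> (\<sigma> *v w) = 0" for w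
    using a0 b0 b2 by (subst inner_mat) (simp add: inner_diff_left c_def)
  then have "a - c *\<^sub>R b = 0" by (rule inner_mat_zero[OF inv])
  then show ?thesis by auto
qed

abbreviation fT1s :: "real^3 \<Rightarrow> real" where
  "fT1s \<equiv> \<lambda>v. (v$1 * v$2 + (v$3)^2)^2 + (v$2)^2 * (v$3)^2 + (v$2)^4"
abbreviation fT1ss :: "real^3 \<Rightarrow> real" where
  "fT1ss \<equiv> \<lambda>v. (v$1 * v$2 + (v$3)^2)^2 + (v$2)^4"
abbreviation fT2s :: "real^3 \<Rightarrow> real" where
  "fT2s \<equiv> \<lambda>v. (v$1 * v$2 + (v$3)^2)^2 + (v$2)^2 * (v$3)^2"

lemma is_form_conic: "is_form 2 (\<lambda>v. v$1 * v$2 + (v$3)^2)"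
  using is_form_coords by (intro is_form_add is_form_mult is_form_pow) auto

lemma quartics_P34: "fT1s \<in> P34" "fT1ss \<in> P34" "fT2s \<in> P34"
proof -
  have sq: "is_form 4 (\<lambda>v. (v$1 * v$2 + (v$3)^2)^2)" "is_form 4 (\<lambda>v. (v$2)^4)"
    "is_form 4 (\<lambda>v. (v$2)^2 * (v$3)^2)"
    using is_form_coords
    by (auto intro: is_form_pow[OF is_form_conic] is_form_pow is_form_mult[OF is_form_pow is_form_pow])
  show "fT1s \<in> P34" "fT1ss \<in> P34" "fT2s \<in> P34"
    unfolding P34_def psd_def using sq by (auto intro!: is_form_add)
qed

lemma quartics_along_conic:
  "\<forall>s. \<bar>s\<bar> < 1 \<longrightarrow> fT1s (conic_point s) \<le> 2 * \<bar>s\<bar>^6"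
  "\<forall>s. \<bar>s\<bar> < 1 \<longrightarrow> fT1ss (conic_point s) \<le> 1 * \<bar>s\<bar>^8"
  "\<forall>s. \<bar>s\<bar> < 1 \<longrightarrow> fT2s (conic_point s) \<le> 1 * \<bar>s\<bar>^6"
proof (intro allI impI)
  fix s :: real
  assume "\<bar>s\<bar> < 1"
  then have "\<bar>s\<bar>^6 * \<bar>s\<bar>^2 \<le> \<bar>s\<bar>^6 * 1"
    by (intro mult_left_mono) (auto simp: abs_square_le_1)
  then show "fT1s (conic_point s) \<le> 2 * \<bar>s\<bar>^6"
    by (simp add: conic_point_def power_even_abs eval_nat_numeral algebra_simps)
qed (simp_all add: conic_point_def power_even_abs eval_nat_numeral algebra_simps)

section \<open>Inclusions of the faces F_(l,U)\<close>

lemma dominated_by_abs: "0 \<le> X \<Longrightarrow> X \<le> Y \<Longrightarrow> d * X \<le> \<bar>d\<bar> * (Y::real)"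
  by (meson abs_ge_self abs_ge_zero mult_left_mono mult_right_mono order.trans)

lemma subface_F_lU_I:
  fixes \<sigma> :: "real^3^3"
  assumes inv: "invertible \<sigma>" and L: "\<And>v. l \<bullet> (\<sigma> *v v) = v$2" and f: "f \<in> P34"
    and bound: "\<And>h. is_form 2 h \<Longrightarrow> psd h \<Longrightarrow> (\<forall>u\<in>U. h u = 0)
      \<Longrightarrow> \<exists>C. \<forall>w. (w$2)^2 * h (\<sigma> *v w) \<le> C * f w"
  shows "subface (F_lU l U) (face_of_form f)"
proof (rule subface_face_of_formI[OF inv f F_lU_subset_P34])
  fix g assume "g \<in> F_lU l U"
  then obtain h where g: "g = (\<lambda>v. (l \<bullet> v)^2 * h v)"
    and h: "is_form 2 h" "psd h" "\<forall>u\<in>U. h u = 0"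
    by (rule F_lU_elem)
  obtain C where "\<forall>w. (w$2)^2 * h (\<sigma> *v w) \<le> C * f w" using bound[OF h] by blast
  then show "\<exists>C. \<forall>w. w \<noteq> 0 \<longrightarrow> g (\<sigma> *v w) \<le> C * f w" using g L by auto
qed

lemma subface_L2_T1s:
  assumes "l \<noteq> 0" "p \<noteq> 0" "l \<bullet> p = 0"
  shows "subface (F_lU l (proj_point p)) FT1s"
proof -
  obtain \<sigma> :: "real^3^3" where inv: "invertible \<sigma>" and L: "\<And>v. l \<bullet> (\<sigma> *v v) = v$2"
    and e1: "\<sigma> *v axis 1 1 = (- (l \<bullet> l)) *\<^sub>R p"
    using adapted_coordinates_point[OF assms] by blast
  have e1_in: "\<sigma> *v axis 1 1 \<in> proj_point p"
    unfolding e1 proj_point_def by (intro span_scale span_base) simp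
  show ?thesis unfolding FT1s_def
  proof (rule subface_F_lU_I[OF inv L quartics_P34(1)])
    fix h assume h: "is_form 2 h" "psd h" "\<forall>u\<in>proj_point p. h u = 0"
    obtain C where C: "\<And>w. h (\<sigma> *v w) \<le> C * ((w$2)^2 + (w$3)^2)"
      using quadric_zero_at_e1[OF is_form_comp[OF h(1)] psd_comp[OF h(2) inv]] h(3) e1_in by blast
    have "(w$2)^2 * h (\<sigma> *v w) \<le> \<bar>C\<bar> * fT1s w" for w
    proof -
      have "(w$2)^2 * h (\<sigma> *v w) \<le> C * ((w$2)^2 * ((w$2)^2 + (w$3)^2))"
        using mult_left_mono[OF C[of w], of "(w$2)^2"] by (simp add: algebra_simps)
      also have "\<dots> \<le> \<bar>C\<bar> * fT1s w"
      proof (rule dominated_by_abs)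
        have "(w$2)^2 * ((w$2)^2 + (w$3)^2) = (w$2)^2 * (w$3)^2 + (w$2)^4"
          by (simp add: algebra_simps eval_nat_numeral)
        then show "(w$2)^2 * ((w$2)^2 + (w$3)^2) \<le> fT1s w"
          using zero_le_power2[of "w$1 * w$2 + (w$3)^2"] by linarith
      qed simp
      finally show ?thesis .
    qed
    then show "\<exists>C. \<forall>w. (w$2)^2 * h (\<sigma> *v w) \<le> C * fT1s w" by blast
  qed
qed

lemma subface_L4_T1ss:
  assumes "l \<noteq> 0"
  shows "subface (F_lU l (proj_line l)) FT1ss"
proof -
  obtain \<sigma> :: "real^3^3" where inv: "invertible \<sigma>" and L: "\<And>v. l \<bullet> (\<sigma> *v v) = v$2"
    using adapted_coordinates_line[OF assms] by blast
  show ?thesis unfolding FT1ss_def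
  proof (rule subface_F_lU_I[OF inv L quartics_P34(2)])
    fix h assume h: "is_form 2 h" "psd h" "\<forall>u\<in>proj_line l. h u = 0"
    then have "\<And>v. l \<bullet> v = 0 \<Longrightarrow> h v = 0" by (simp add: proj_line_def)
    then obtain d where d: "\<And>v. h v = d * (l \<bullet> v)^2"
      using quadric_zero_on_line[OF assms h(1,2)] by blast
    have "(w$2)^2 * h (\<sigma> *v w) \<le> \<bar>d\<bar> * fT1ss w" for w
    proof -
      have "(w$2)^2 * h (\<sigma> *v w) = d * (w$2)^4" by (simp add: d L eval_nat_numeral)
      also have "\<dots> \<le> \<bar>d\<bar> * fT1ss w" by (rule dominated_by_abs) simp_all
      finally show ?thesis .
    qed
    then show "\<exists>C. \<forall>w. (w$2)^2 * h (\<sigma> *v w) \<le> C * fT1ss w" by blast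
  qed
qed

lemma subface_L3_T2s:
  assumes "l \<noteq> 0" "\<not> (\<exists>c. k = c *\<^sub>R l)"
  shows "subface (F_lU l (proj_line k)) FT2s"
proof -
  obtain \<sigma> :: "real^3^3" where inv: "invertible \<sigma>" and L: "\<And>v. l \<bullet> (\<sigma> *v v) = v$2"
    and K: "\<And>v. k \<bullet> (\<sigma> *v v) = v$3"
    by (rule adapted_coordinates[OF cross3_nonzero[OF assms]]) blast
  have "k \<noteq> 0"
  proof
    assume "k = 0"
    then have "k = 0 *\<^sub>R l" by simp
    then show False using assms(2) by blast
  qed
  show ?thesis unfolding FT2s_def
  proof (rule subface_F_lU_I[OF inv L quartics_P34(3)])
    fix h assume h: "is_form 2 h" "psd h" "\<forall>u\<in>proj_line k. h u = 0"
    then have "\<And>v. k \<bullet> v = 0 \<Longrightarrow> h v = 0" by (simp add: proj_line_def)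
    then obtain d where d: "\<And>v. h v = d * (k \<bullet> v)^2"
      using quadric_zero_on_line[OF \<open>k \<noteq> 0\<close> h(1,2)] by blast
    have "(w$2)^2 * h (\<sigma> *v w) \<le> \<bar>d\<bar> * fT2s w" for w
    proof -
      have "(w$2)^2 * h (\<sigma> *v w) = d * ((w$2)^2 * (w$3)^2)" by (simp add: d K algebra_simps)
      also have "\<dots> \<le> \<bar>d\<bar> * fT2s w" by (rule dominated_by_abs) simp_all
      finally show ?thesis .
    qed
    then show "\<exists>C. \<forall>w. (w$2)^2 * h (\<sigma> *v w) \<le> C * fT2s w" by blast
  qed
qed

section \<open>Non-inclusions of the faces F_(l,U)\<close>

text \<open>Every square l^2 u^2 with u(q) = 0
  must vanish to order 3 along the conic, so every such u vanishes at \<sigma> e1; hence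
  \<sigma> e1 is a multiple of q, and then l(q) = 0 would follow.\<close>
lemma not_subface_L1_T1s:
  assumes l: "l \<noteq> 0" and lq: "l \<bullet> q \<noteq> 0"
  shows "\<not> subface (F_lU l (proj_point q)) FT1s"
proof
  assume "subface (F_lU l (proj_point q)) FT1s"
  from subface_face_of_formD[OF this[unfolded FT1s_def]]
  obtain \<sigma> :: "real^3^3" where inv: "invertible \<sigma>"
    and dom: "\<forall>g\<in>F_lU l (proj_point q). \<exists>\<epsilon>>0. \<forall>w. w \<noteq> 0 \<longrightarrow> \<epsilon> * g (\<sigma> *v w) \<le> fT1s w"
    by blast
  define c1 where "c1 = \<sigma> *v axis 1 1"
  have zero_at_c1: "l \<bullet> c1 = 0 \<and> u \<bullet> c1 = 0" if u: "u \<bullet> q = 0" "u \<noteq> 0" for u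
  proof -
    have "span {q} \<subseteq> {x. u \<bullet> x = 0}"
      using u(1) subspace_hyperplane[of u] by (intro span_minimal) (auto simp: inner_commute)
    then have "(\<lambda>v. (l \<bullet> v)^2 * (u \<bullet> v)^2) \<in> F_lU l (proj_point q)"
      by (intro F_lU_square) (auto simp: proj_point_def)
    from dom[rule_format, OF this] obtain \<epsilon> where "\<epsilon> > 0" "\<forall>w. w \<noteq> 0 \<longrightarrow> \<epsilon> * ((l \<bullet> (\<sigma> *v w))^2 * (u \<bullet> (\<sigma> *v w))^2) \<le> fT1s w"
      by blast
    from order_bound_from_domination[where f=fT1s, OF inv l u(2) this quartics_along_conic(1)]
    have "6 \<le> 2 * (order 0 (conic_poly l \<sigma>) + order 0 (conic_poly u \<sigma>))" .
    moreover have "order 0 (conic_poly l \<sigma>) \<le> 2" "order 0 (conic_poly u \<sigma>) \<le> 2"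
      using order_conic_poly_le_2[OF inv] l u(2) by auto
    ultimately have "1 \<le> order 0 (conic_poly l \<sigma>)" "1 \<le> order 0 (conic_poly u \<sigma>)" by presburger+
    then show ?thesis using conic_order_zeros(1)[OF inv] l u(2) unfolding c1_def by blast
  qed
  have q: "q \<noteq> 0" using lq by auto
  obtain i where "cross3 q (axis i 1) \<noteq> 0" using cross_basis_nonzero[OF q] by blast
  moreover have "cross3 q (axis i 1) \<bullet> q = 0"
    using dot_cross_self(1)[of q "axis i 1"] by (simp add: inner_commute)
  ultimately have l_c1: "l \<bullet> c1 = 0" using zero_at_c1 by blast
  define t where "t = (q \<bullet> c1) / (q \<bullet> q)"
  define u where "u = c1 - t *\<^sub>R q"
  have "u \<bullet> q = c1 \<bullet> q - t * (q \<bullet> q)" by (simp add: u_def inner_diff_left)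
  then have uq: "u \<bullet> q = 0" using q by (simp add: t_def inner_commute)
  have "u = 0"
  proof (rule ccontr)
    assume "u \<noteq> 0"
    then have "u \<bullet> c1 = 0" using zero_at_c1 uq by blast
    then have "u \<bullet> u = 0" using uq by (simp add: u_def inner_diff_right inner_commute)
    then show False using \<open>u \<noteq> 0\<close> by simp
  qed
  then have "c1 = t *\<^sub>R q" by (simp add: u_def)
  moreover have "c1 \<noteq> 0" unfolding c1_def by (rule invertible_nonzero[OF inv]) (simp add: axis_eq_0_iff)
  ultimately show False using l_c1 lq by simp
qed

text \<open>(ii), negative half: F_L3 is not \<Subset> F**_T1.  Here l^2 k^2 must vanish to order 4
  along the conic, so l and k both vanish at \<sigma> e1 and \<sigma> e3, i.e. they are proportional.\<close>
lemma not_subface_L3_T1ss: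
  assumes l: "l \<noteq> 0" and k: "k \<noteq> 0" and nc: "\<not> (\<exists>c. k = c *\<^sub>R l)"
  shows "\<not> subface (F_lU l (proj_line k)) FT1ss"
proof
  assume "subface (F_lU l (proj_line k)) FT1ss"
  from subface_face_of_formD[OF this[unfolded FT1ss_def]]
  obtain \<sigma> :: "real^3^3" where inv: "invertible \<sigma>"
    and dom: "\<forall>g\<in>F_lU l (proj_line k). \<exists>\<epsilon>>0. \<forall>w. w \<noteq> 0 \<longrightarrow> \<epsilon> * g (\<sigma> *v w) \<le> fT1ss w"
    by blast
  have "(\<lambda>v. (l \<bullet> v)^2 * (k \<bullet> v)^2) \<in> F_lU l (proj_line k)"
    by (rule F_lU_square) (simp add: proj_line_def)
  from dom[rule_format, OF this] obtain \<epsilon> where "\<epsilon> > 0" "\<forall>w. w \<noteq> 0 \<longrightarrow> \<epsilon> * ((l \<bullet> (\<sigma> *v w))^2 * (k \<bullet> (\<sigma> *v w))^2) \<le> fT1ss w"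
    by blast
  from order_bound_from_domination[where f=fT1ss, OF inv l k this quartics_along_conic(2)]
  have "8 \<le> 2 * (order 0 (conic_poly l \<sigma>) + order 0 (conic_poly k \<sigma>))" .
  moreover have "order 0 (conic_poly l \<sigma>) \<le> 2" "order 0 (conic_poly k \<sigma>) \<le> 2"
    using order_conic_poly_le_2[OF inv] l k by auto
  ultimately have "2 \<le> order 0 (conic_poly l \<sigma>)" "2 \<le> order 0 (conic_poly k \<sigma>)" by presburger+
  then obtain c where "l = c *\<^sub>R k"
    using proportional_if_common_zeros[OF inv k] conic_order_zeros(2)[OF inv] l k by meson
  then have "k = (1 / c) *\<^sub>R l" using l by auto
  then show False using nc by blast
qed

text \<open>Now l^4 must vanish to order 3
  along the conic, so l vanishes at \<sigma> e1 and \<sigma> e3; since F*_T2 also vanishes at e2,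
  l vanishes at \<sigma> e2 as well, forcing l = 0.\<close>
lemma not_subface_L4_T2s:
  assumes l: "l \<noteq> 0"
  shows "\<not> subface (F_lU l (proj_line l)) FT2s"
proof
  assume "subface (F_lU l (proj_line l)) FT2s"
  from subface_face_of_formD[OF this[unfolded FT2s_def]]
  obtain \<sigma> :: "real^3^3" where inv: "invertible \<sigma>"
    and dom: "\<forall>g\<in>F_lU l (proj_line l). \<exists>\<epsilon>>0. \<forall>w. w \<noteq> 0 \<longrightarrow> \<epsilon> * g (\<sigma> *v w) \<le> fT2s w"
    by blast
  have "(\<lambda>v. (l \<bullet> v)^2 * (l \<bullet> v)^2) \<in> F_lU l (proj_line l)"
    by (rule F_lU_square) (simp add: proj_line_def)
  from dom[rule_format, OF this] obtain \<epsilon> where \<epsilon>: "\<epsilon> > 0"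
    and ineq: "\<forall>w. w \<noteq> 0 \<longrightarrow> \<epsilon> * ((l \<bullet> (\<sigma> *v w))^2 * (l \<bullet> (\<sigma> *v w))^2) \<le> fT2s w"
    by blast
  from order_bound_from_domination[where f=fT2s, OF inv l l \<epsilon> ineq quartics_along_conic(3)]
  have "2 \<le> order 0 (conic_poly l \<sigma>)" by presburger
  then have "l \<bullet> (\<sigma> *v axis 1 1) = 0" "l \<bullet> (\<sigma> *v axis 3 1) = 0"
    using conic_order_zeros(2)[OF inv l] by auto
  moreover have "l \<bullet> (\<sigma> *v axis 2 1) = 0"
  proof -
    have e2: "axis 2 1 \<noteq> (0::real^3)" by (simp add: axis_eq_0_iff)
    have "\<epsilon> * ((l \<bullet> (\<sigma> *v axis 2 1))^2 * (l \<bullet> (\<sigma> *v axis 2 1))^2) \<le> 0"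
      using ineq[rule_format, OF e2] by (simp add: axis_def)
    then have "(l \<bullet> (\<sigma> *v axis 2 1))^2 * (l \<bullet> (\<sigma> *v axis 2 1))^2 \<le> 0"
      using \<epsilon> by (simp add: mult_le_0_iff)
    then show ?thesis
      by (metis mult_eq_0_iff order_antisym zero_le_mult_iff zero_le_power2 zero_eq_power2)
  qed
  ultimately have "\<And>w. l \<bullet> (\<sigma> *v w) = 0" by (subst inner_mat) simp
  then show False using inner_mat_zero[OF inv] l by blast
qed

section \<open>The face F_Q\<close>

text \<open>The substitution x = (u+v)/2, y = (v-u)/2 turns x^2 - y^2 + z^2 into uv + z^2,
  the conic whose square is the leading term of all three quartics.\<close>
definition sigma_Q :: "real^3^3" where
  "sigma_Q = cols (vector [1/2, -1/2, 0]) (vector [1/2, 1/2, 0]) (vector [0, 0, 1])"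

lemma sigma_Q_coords:
  "(sigma_Q *v w)$1 = w$1/2 + w$2/2" "(sigma_Q *v w)$2 = - (w$1/2) + w$2/2" "(sigma_Q *v w)$3 = w$3"
  by (simp_all add: sigma_Q_def cols_mult)

lemma sigma_Q_invertible: "invertible sigma_Q"
proof (rule invertibleI_ker)
  fix x assume "sigma_Q *v x = 0"
  then have "(sigma_Q *v x)$1 = 0" "(sigma_Q *v x)$2 = 0" "(sigma_Q *v x)$3 = 0" by simp_all
  then have "x$1 = 0" "x$2 = 0" "x$3 = 0" unfolding sigma_Q_coords by linarith+
  then show "x = 0" by (simp add: vec_eq_iff forall_3)
qed

lemma subface_Q:
  assumes f: "f \<in> P34" and f_ge: "\<And>w. (w$1 * w$2 + (w$3)^2)^2 \<le> f w"
  shows "subface FQ (face_of_form f)"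
proof (rule subface_face_of_formI[OF sigma_Q_invertible f])
  show "FQ \<subseteq> P34" by (auto simp: FQ_def face_of_form_def)
  fix g assume "g \<in> FQ"
  then obtain \<epsilon> where \<epsilon>: "\<epsilon> > 0"
    and e: "psd (\<lambda>v. ((v$1)^2 - (v$2)^2 + (v$3)^2)^2 - \<epsilon> * g v)"
    unfolding FQ_def face_of_form_def P34_def by blast
  have "g (sigma_Q *v w) \<le> (1/\<epsilon>) * f w" if w: "w \<noteq> 0" for w
  proof -
    have "\<epsilon> * g (sigma_Q *v w)
        \<le> (((sigma_Q *v w)$1)^2 - ((sigma_Q *v w)$2)^2 + ((sigma_Q *v w)$3)^2)^2"
      using e invertible_nonzero[OF sigma_Q_invertible w] unfolding psd_def by fastforce
    also have "((sigma_Q *v w)$1)^2 - ((sigma_Q *v w)$2)^2 + ((sigma_Q *v w)$3)^2 = w$1 * w$2 + (w$3)^2"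
      unfolding sigma_Q_coords by (simp add: power2_eq_square algebra_simps)
    also have "(w$1 * w$2 + (w$3)^2)^2 \<le> f w" by (rule f_ge)
    finally show ?thesis using \<epsilon> by (simp add: field_simps)
  qed
  then show "\<exists>C. \<forall>w. w \<noteq> 0 \<longrightarrow> g (sigma_Q *v w) \<le> C * f w" by blast
qed

theorem mainTheorem20:
  fixes l k p q :: "real^3"
  assumes "l \<noteq> 0" and "k \<noteq> 0" and "\<not> (\<exists>c. k = c *\<^sub>R l)"
    and "p \<noteq> 0" and "l \<bullet> p = 0"
    and "l \<bullet> q \<noteq> 0"
  shows "(subface (F_lU l (proj_point p)) FT1s \<and> \<not> subface (F_lU l (proj_point q)) FT1s)
    \<and> (subface (F_lU l (proj_line l)) FT1ss \<and> \<not> subface (F_lU l (proj_line k)) FT1ss)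
    \<and> (subface (F_lU l (proj_line k)) FT2s \<and> \<not> subface (F_lU l (proj_line l)) FT2s)
    \<and> (subface FQ FT1s \<and> subface FQ FT1ss \<and> subface FQ FT2s)"
proof (intro conjI)
  show "subface (F_lU l (proj_point p)) FT1s" using subface_L2_T1s assms(1,4,5) .
  show "\<not> subface (F_lU l (proj_point q)) FT1s" using not_subface_L1_T1s assms(1,6) .
  show "subface (F_lU l (proj_line l)) FT1ss" using subface_L4_T1ss assms(1) .
  show "\<not> subface (F_lU l (proj_line k)) FT1ss" using not_subface_L3_T1ss assms(1-3) .
  show "subface (F_lU l (proj_line k)) FT2s" using subface_L3_T2s assms(1,3) .
  show "\<not> subface (F_lU l (proj_line l)) FT2s" using not_subface_L4_T2s assms(1) .
  show "subface FQ FT1s" "subface FQ FT1ss" "subface FQ FT2s"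
    unfolding FT1s_def FT1ss_def FT2s_def using quartics_P34 by (auto intro!: subface_Q)
qed

end
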